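(* Let $y$ be a string. For any $x\in\mathrm{Substr}(y)$, if $x\in\mathcal{R}$ (i.e., $x$ is represented by a black node of $\mathrm{AST}(y)$), then every prefix of $x$ also belongs to $\mathcal{R}$ (i.e., is represented by a black node of $\mathrm{AST}(y)$).
   Context: $\mathrm{Substr}(y)$ is the set of substrings of $y$. $\mathrm{EndPos}(x)=\{i\mid y[i-|x|+1..i]=x\}$; for $x\in\mathrm{Substr}(y)$, $\overleftarrow{x}$ denotes the longest string $z$ with $\mathrm{EndPos}(z)=\mathrm{EndPos}(x)$, and $\mathcal{R}=\{\overleftarrow{x}\mid x\in\mathrm{Substr}(y)\}$. Similarly, with $\mathrm{BegPos}(x)=\{i\mid y[i..i+|x|-1]=x\}$, $\overrightarrow{x}$ is the longest $z$ with $\mathrm{BegPos}(z)=\mathrm{BegPos}(x)$ and $\mathcal{L}=\{\overrightarrow{x}\mid x\in\mathrm{Substr}(y)\}$. $\mathrm{AST}(y)$ is the rooted tree on node set $\mathcal{L}\cup\mathcal{R}$ in which the parent of each non-root node $z$ is its longest proper prefix in $\mathcal{L}\cup\mathcal{R}$ (edge labeled by the remaining suffix); a node is black iff it belongs to $\mathcal{R}$. *)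

theory Defs
  imports Main "HOL-Library.Sublist"
begin

definition Substr :: "'a list \<Rightarrow> 'a list set" where
  "Substr y = {x. \<exists>u v. y = u @ x @ v}"

(* End positions, 1-indexed as in the paper: i such that y[i-|x|+1..i] = x, i.e. the
   first i letters of y end with x.  i ranges over 0..|y| (so EndPos of the empty string
   is {0,...,|y|}). *)
definition EndPos :: "'a list \<Rightarrow> 'a list \<Rightarrow> nat set" where
  "EndPos y x = {i. length x \<le> i \<and> i \<le> length y \<and> drop (i - length x) (take i y) = x}"

definition left_rep :: "'a list \<Rightarrow> 'a list \<Rightarrow> 'a list" where
  "left_rep y x = (THE z. EndPos y z = EndPos y x \<and>
        (\<forall>z'. EndPos y z' = EndPos y x \<longrightarrow> length z' \<le> length z))"

definition Rset :: "'a list \<Rightarrow> 'a list set" where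
  "Rset y = left_rep y ` Substr y"

end

(* A substring x is black exactly when no one-letter left extension c # x has the same end
   positions as x.  The end positions of p @ q are determined by those of p (and by q), so if
   some c # p had the same end positions as p, then c # p @ q would have the same end positions
   as p @ q.  Hence a prefix of a black node cannot fail to be black. *)

theory Submission
  imports Defs
begin

lemma Substr_eq_sublist: "Substr y = {x. sublist x y}"
  by (auto simp: Substr_def sublist_def)

lemma EndPos_iff_suffix: "i \<in> EndPos y x \<longleftrightarrow> i \<le> length y \<and> suffix x (take i y)"
proof (cases "i \<le> length y")
  case True
  then have "length (take i y) = i" by simp
  have "(length x \<le> i \<and> drop (i - length x) (take i y) = x) \<longleftrightarrow> suffix x (take i y)"
  proof
    assume "length x \<le> i \<and> drop (i - length x) (take i y) = x"
    then show "suffix x (take i y)" by (metis suffix_drop)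
  next
    assume "suffix x (take i y)"
    then obtain w where "take i y = w @ x" by (auto simp: suffix_def)
    with \<open>length (take i y) = i\<close> show "length x \<le> i \<and> drop (i - length x) (take i y) = x"
      by auto
  qed
  with True show ?thesis unfolding EndPos_def by auto
qed (simp add: EndPos_def)

lemma EndPos_nonempty_if_Substr: "x \<in> Substr y \<Longrightarrow> EndPos y x \<noteq> {}"
proof -
  assume "x \<in> Substr y"
  then obtain u v where "y = u @ x @ v" by (auto simp: Substr_def)
  then have "length (u @ x) \<in> EndPos y x"
    by (simp add: EndPos_iff_suffix suffixI)
  then show ?thesis by blast
qed

lemma length_le_if_EndPos: "i \<in> EndPos y x \<Longrightarrow> length x \<le> i"
  by (simp add: EndPos_def)

lemma EndPos_antimono_suffix: "suffix x z \<Longrightarrow> EndPos y z \<subseteq> EndPos y x"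
  by (auto simp: EndPos_iff_suffix intro: suffix_order.trans)

lemma EndPos_eq_imp_eq:
  assumes "EndPos y z = EndPos y x" and "EndPos y x \<noteq> {}" and "length z = length x"
  shows "z = x"
proof -
  from assms(2) obtain i where "i \<in> EndPos y x" by blast
  with assms(1) have "suffix z (take i y)" "suffix x (take i y)"
    by (auto simp: EndPos_iff_suffix)
  with assms(3) show ?thesis
    by (metis suffix_length_suffix suffix_order.antisym order_refl)
qed

lemma
  assumes "x \<in> Substr y"
  shows EndPos_left_rep: "EndPos y (left_rep y x) = EndPos y x"
    and length_le_left_rep: "EndPos y z = EndPos y x \<Longrightarrow> length z \<le> length (left_rep y x)"
proof -
  let ?P = "\<lambda>z. EndPos y z = EndPos y x"
  obtain i where i: "i \<in> EndPos y x"
    using EndPos_nonempty_if_Substr[OF assms] by blast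
  then have nonempty: "EndPos y x \<noteq> {}" by blast
  have "\<forall>z. ?P z \<longrightarrow> length z < Suc i"
    using i length_le_if_EndPos by (metis le_imp_less_Suc)
  then obtain z where z: "?P z" "\<forall>z'. ?P z' \<longrightarrow> length z' \<le> length z"
    using Lattices_Big.ex_has_greatest_nat[of ?P x length] by blast
  have unique: "u = z" if u: "?P u" "\<forall>z'. ?P z' \<longrightarrow> length z' \<le> length u" for u
  proof (rule EndPos_eq_imp_eq)
    show "EndPos y u = EndPos y z" and "EndPos y z \<noteq> {}"
      using u(1) z(1) nonempty by simp_all
    show "length u = length z"
      using z(2)[rule_format, OF u(1)] u(2)[rule_format, OF z(1)] by simp
  qed
  have "left_rep y x = z"
    unfolding left_rep_def
  proof (rule the_equality)
    show "?P z \<and> (\<forall>z'. ?P z' \<longrightarrow> length z' \<le> length z)"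
      using z by blast
  qed (use unique in blast)
  with z show "?P (left_rep y x)" and "?P z' \<Longrightarrow> length z' \<le> length (left_rep y x)" for z'
    by auto
qed

lemma strict_suffix_imp_suffix_Cons:
  assumes "strict_suffix x z"
  obtains c where "suffix (c # x) z"
proof -
  from assms obtain v where "z = v @ x" "v \<noteq> []"
    by (auto simp: strict_suffix_def suffix_def)
  then obtain v' c where "z = v' @ c # x"
    by (cases v rule: rev_exhaust) auto
  then show thesis using that suffixI by blast
qed

text \<open>The right-hand side says that \<open>x\<close> is left-branching or a prefix of \<open>y\<close>.\<close>

lemma Rset_iff_EndPos_Cons:
  assumes "x \<in> Substr y"
  shows "x \<in> Rset y \<longleftrightarrow> (\<forall>c. EndPos y (c # x) \<noteq> EndPos y x)"
proof
  assume "x \<in> Rset y"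
  then obtain w where w: "w \<in> Substr y" "x = left_rep y w"
    unfolding Rset_def by blast
  show "\<forall>c. EndPos y (c # x) \<noteq> EndPos y x"
  proof (intro allI notI)
    fix c assume "EndPos y (c # x) = EndPos y x"
    with EndPos_left_rep[OF w(1)] length_le_left_rep[OF w(1)] w(2) have "length (c # x) \<le> length x" by metis
    then show False by simp
  qed
next
  assume no_ext: "\<forall>c. EndPos y (c # x) \<noteq> EndPos y x"
  let ?z = "left_rep y x"
  have z: "EndPos y ?z = EndPos y x" "length x \<le> length ?z"
    using EndPos_left_rep[OF assms] length_le_left_rep[OF assms] by auto
  have "length ?z \<le> length x"
  proof (rule ccontr)
    assume "\<not> length ?z \<le> length x"
    moreover obtain i where "i \<in> EndPos y x"
      using EndPos_nonempty_if_Substr[OF assms] by blast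
    then have "suffix x (take i y)" "suffix ?z (take i y)"
      using z(1) by (auto simp: EndPos_iff_suffix)
    ultimately have "strict_suffix x ?z"
      by (auto simp: strict_suffix_def intro: suffix_length_suffix)
    then obtain c where "suffix (c # x) ?z"
      using strict_suffix_imp_suffix_Cons by blast
    then have "EndPos y x \<subseteq> EndPos y (c # x)"
      using z(1) EndPos_antimono_suffix by blast
    moreover have "EndPos y (c # x) \<subseteq> EndPos y x"
      by (rule EndPos_antimono_suffix) (simp add: suffix_def)
    ultimately show False using no_ext by blast
  qed
  with z(2) have "?z = x"
    by (intro EndPos_eq_imp_eq[OF z(1) EndPos_nonempty_if_Substr[OF assms]]) simp
  with assms show "x \<in> Rset y"
    unfolding Rset_def by (metis image_eqI)
qed

lemma EndPos_append:
  "i \<in> EndPos y (p @ q) \<longleftrightarrow> i \<in> EndPos y q \<and> i - length q \<in> EndPos y p"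
proof (cases "i \<in> EndPos y q")
  case True
  then obtain u where u: "take i y = u @ q" and i: "i \<le> length y"
    by (auto simp: EndPos_iff_suffix suffix_def)
  then have "length u = i - length q"
    by (metis add_diff_cancel_right' length_append length_take min.absorb2)
  have "take (i - length q) y = take (i - length q) (take i y)"
    by (simp add: min_def)
  also have "\<dots> = u"
    using u \<open>length u = i - length q\<close> by simp
  finally show ?thesis
    using True u i by (auto simp: EndPos_iff_suffix)
next
  case False
  then show ?thesis
    by (auto simp: EndPos_iff_suffix dest: suffix_appendD)
qed

lemma EndPos_append_cong:
  "EndPos y p = EndPos y p' \<Longrightarrow> EndPos y (p @ q) = EndPos y (p' @ q)"
  by (auto simp: EndPos_append)

theorem lemma4:
  fixes y x :: "'a list"
  assumes "x \<in> Substr y" and "x \<in> Rset y"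
  shows "\<forall>p. prefix p x \<longrightarrow> p \<in> Rset y"
proof (intro allI impI)
  fix p assume "prefix p x"
  then obtain q where x: "x = p @ q" by (auto simp: prefix_def)
  have "p \<in> Substr y"
    using assms(1) \<open>prefix p x\<close> by (auto simp: Substr_eq_sublist intro: sublist_order.order.trans)
  moreover have "EndPos y (c # p) \<noteq> EndPos y p" for c
    using EndPos_append_cong[of y "c # p" p q] assms x
    by (auto simp: Rset_iff_EndPos_Cons)
  ultimately show "p \<in> Rset y" by (simp add: Rset_iff_EndPos_Cons)
qed

end
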